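(* Let $\mathbf a=\{a_k\}_{k\ge0}$ with $\operatorname{Im}a_k>0$ have no limit points on the real axis $\mathbb R$, satisfy $\lim_{n\to\infty}\sigma_n=+\infty$, and satisfy $\varsigma_n/\sigma_n\le C$ for all $n\ge1$ with a constant $C$. Then for every $\delta>0$ and every $x\in\mathbb R$, $$\lim_{n\to\infty}\int_0^\delta\frac{\sin\big(y\,\mu_n(y;x)\big)}{y}\,dy=\frac\pi2\quad\text{and}\quad\lim_{n\to\infty}\int_0^\delta\frac{\sin\big(y\,\mu_n(-y;x)\big)}{y}\,dy=\frac\pi2.$$
   Context: For $y\ne0$, $x\in\mathbb R$: $\mu_n(y;x):=\frac1y\int_x^{x+y}\sum_{k=0}^{n-1}\frac{2\operatorname{Im}a_k}{(u-\operatorname{Re}a_k)^2+(\operatorname{Im}a_k)^2}\,du$. $\sigma_n:=\sum_{k=0}^{n-1}\frac{|\operatorname{Im}a_k|}{1+|a_k|^2}$, $\varsigma_n:=\sum_{k=0}^{n-1}\frac{1}{(\operatorname{Im}a_k)^2}$. "No limit points on $\mathbb R$" means no subsequence of $\{a_k\}$ converges to a real number. *)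

theory Defs
  imports "HOL-Analysis.Analysis"
begin

definition poisson_sum :: "(nat \<Rightarrow> complex) \<Rightarrow> nat \<Rightarrow> real \<Rightarrow> real" where
  "poisson_sum a n u = (\<Sum>k<n. 2 * Im (a k) / ((u - Re (a k))^2 + (Im (a k))^2))"

definition mu :: "(nat \<Rightarrow> complex) \<Rightarrow> nat \<Rightarrow> real \<Rightarrow> real \<Rightarrow> real" where
  "mu a n y x = (1 / y) *
     (if 0 \<le> y then integral {x..x+y} (poisson_sum a n)
      else - integral {x+y..x} (poisson_sum a n))"

definition sigma :: "(nat \<Rightarrow> complex) \<Rightarrow> nat \<Rightarrow> real" where
  "sigma a n = (\<Sum>k<n. \<bar>Im (a k)\<bar> / (1 + (cmod (a k))^2))"

definition varsigma :: "(nat \<Rightarrow> complex) \<Rightarrow> nat \<Rightarrow> real" where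
  "varsigma a n = (\<Sum>k<n. 1 / (Im (a k))^2)"

definition no_real_limit_points :: "(nat \<Rightarrow> complex) \<Rightarrow> bool" where
  "no_real_limit_points a \<longleftrightarrow>
     \<not> (\<exists>r::real. \<exists>s::nat \<Rightarrow> nat. strict_mono s \<and> (a \<circ> s) \<longlonglongrightarrow> complex_of_real r)"

end

theory Submission
  imports Defs "HOL-Probability.Sinc_Integral"
begin

text \<open>The integrand of \<open>mu\<close> is the derivative of \<open>arctan_sum\<close>, so \<open>F\<^sub>n(y) = y * mu a n y x\<close>
  is an increment of \<open>arctan_sum\<close> and \<open>F\<^sub>n' = poisson_sum a n (x + y)\<close>. Because the \<open>a k\<close> stay
  a uniform distance away from \<open>[x - \<delta>, x + \<delta>]\<close>, this derivative has bounded logarithmic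
  derivative there and is comparable to its value at \<open>y = 0\<close>, which tends to infinity with
  \<open>sigma a n\<close>. For such \<open>F\<close> with large \<open>g = F'\<close>, the integral of \<open>sin (F y) / y\<close> over \<open>[0, b]\<close>
  is close to \<open>Si (g 0 * b)\<close>, since \<open>F y \<approx> g 0 * y\<close> there, and the integral over \<open>[b, \<delta>]\<close> is
  small by integration by parts; a suitable cut \<open>b\<close> yields the limit \<open>Si \<infinity> = \<pi> / 2\<close>.\<close>

lemma abs_sin_diff_le: "\<bar>sin a - sin b\<bar> \<le> \<bar>a - b\<bar>" for a b :: real
proof -
  have "\<bar>sin a - sin b\<bar> = 2 * \<bar>sin ((a - b) / 2)\<bar> * \<bar>cos ((a + b) / 2)\<bar>"
    by (simp add: sin_diff_sin abs_mult)
  also have "\<dots> \<le> 2 * \<bar>(a - b) / 2\<bar> * 1"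
    by (intro mult_mono abs_sin_x_le_abs_x) auto
  finally show ?thesis by simp
qed

lemma has_integral_sin_mult_div:
  fixes c b :: real
  assumes "b \<ge> 0"
  shows "((\<lambda>y. sin (c * y) / y) has_integral Si (c * b)) {0..b}"
proof -
  have "((\<lambda>y. sin (c * y) / y) has_integral Si (c * b) - Si (c * 0)) {0..b}"
  proof (rule fundamental_theorem_of_calculus_interior)
    show "continuous_on {0..b} (\<lambda>y. Si (c * y))"
      by (intro continuous_at_imp_continuous_on ballI continuous_intros isCont_o2[OF _ isCont_Si])
    fix y :: real assume "y \<in> {0<..<b}"
    then have "sinc (c * y) * c = sin (c * y) / y"
      by (cases "c = 0") auto
    moreover have "((\<lambda>y. Si (c * y)) has_real_derivative sinc (c * y) * c) (at y)"
      by (rule DERIV_chain2[OF DERIV_Si]) (auto intro!: derivative_eq_intros)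
    ultimately show "((\<lambda>y. Si (c * y)) has_vector_derivative sin (c * y) / y) (at y)"
      by (simp add: has_real_derivative_iff_has_vector_derivative)
  qed (use assms in auto)
  moreover have "Si 0 = 0"
    using Si_neg[of 0] by simp
  ultimately show ?thesis
    by simp
qed

lemma integrable_on_sin_comp_div:
  fixes F :: "real \<Rightarrow> real"
  assumes F0: "F 0 = 0" and contF: "\<And>y. isCont F y" and dF0: "(F has_real_derivative c) (at 0)"
  shows "(\<lambda>y. sin (F y) / y) integrable_on {a..b}"
proof -
  define h where "h y = sin (F y) / y" for y
  define h0 where "h0 y = (if y = 0 then c else h y)" for y
  have "isCont h0 y" for y
  proof (cases "y = 0")
    case True
    have "((\<lambda>y. sin (F y)) has_real_derivative cos (F 0) * c) (at 0)"
      by (auto intro!: derivative_eq_intros dF0)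
    then have "h \<midarrow>0\<rightarrow> c"
      using F0 unfolding h_def DERIV_def by simp
    then have "h0 \<midarrow>0\<rightarrow> c"
      by (rule LIM_equal[THEN iffD1, rotated]) (simp add: h0_def)
    then show ?thesis
      using True by (simp add: isCont_def h0_def)
  next
    case False
    have "isCont h y"
      unfolding h_def using False by (intro continuous_intros contF) auto
    moreover have "\<forall>\<^sub>F u in nhds y. h u = h0 u"
      using t1_space_nhds[OF False] by (rule eventually_mono) (simp add: h0_def)
    ultimately show ?thesis
      using isCont_cong by blast
  qed
  then have "h0 integrable_on {a..b}"
    by (intro integrable_continuous_interval continuous_at_imp_continuous_on ballI)
  then show ?thesis
    unfolding h_def[symmetric] by (rule integrable_spike_finite[of "{0}", rotated 2]) (auto simp: h0_def)
qed

lemma integral_sin_div_approx_Si_near_0: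
  fixes F :: "real \<Rightarrow> real"
  assumes b: "b > 0" and int: "(\<lambda>y. sin (F y) / y) integrable_on {0..b}"
    and approx: "\<And>y. y \<in> {0..b} \<Longrightarrow> \<bar>F y - c * y\<bar> \<le> L * y^2"
  shows "\<bar>integral {0..b} (\<lambda>y. sin (F y) / y) - Si (c * b)\<bar> \<le> L * b^2"
proof -
  define h where "h y = sin (F y) / y" for y
  obtain I where hI: "(h has_integral I) {0..b}"
    using int unfolding h_def by blast
  have "0 \<le> L * b^2"
    using approx[of b] b by (meson abs_ge_zero atLeastAtMost_iff less_imp_le order_refl order_trans)
  then have L: "L \<ge> 0"
    using b by (simp add: zero_le_mult_iff)
  have diff: "((\<lambda>y. h y - sin (c * y) / y) has_integral I - Si (c * b)) (cbox 0 b)"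
    using has_integral_diff[OF hI has_integral_sin_mult_div[of b c]] b by simp
  have "norm (I - Si (c * b)) \<le> L * b * Henstock_Kurzweil_Integration.content (cbox 0 b)"
  proof (rule has_integral_bound[OF _ diff])
    fix y assume y: "y \<in> cbox 0 b"
    show "norm (h y - sin (c * y) / y) \<le> L * b"
    proof (cases "y = 0")
      case False
      then have "norm (h y - sin (c * y) / y) = \<bar>sin (F y) - sin (c * y)\<bar> / y"
        using y by (simp add: h_def diff_divide_distrib[symmetric])
      also have "\<dots> \<le> L * y^2 / y"
        using abs_sin_diff_le[of "F y" "c * y"] approx[of y] y False
        by (intro divide_right_mono) auto
      also have "\<dots> = L * y"
        using False by (simp add: power2_eq_square)
      also have "\<dots> \<le> L * b"
        using y L by (intro mult_left_mono) auto
      finally show ?thesis .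
    qed (use L b in \<open>simp add: h_def\<close>)
  qed (use L b in simp)
  moreover have "integral {0..b} (\<lambda>y. sin (F y) / y) = I"
    using integral_unique[OF hI] by (simp add: h_def[abs_def])
  ultimately show ?thesis
    using b by (simp add: power2_eq_square mult.assoc)
qed

lemma abs_sub_tangent_at_0_le:
  fixes F g g' :: "real \<Rightarrow> real"
  assumes dF: "\<And>z. z \<in> {0..b} \<Longrightarrow> (F has_real_derivative g z) (at z)"
    and dg: "\<And>z. z \<in> {0..b} \<Longrightarrow> (g has_real_derivative g' z) (at z)"
    and g'_le: "\<And>z. z \<in> {0..b} \<Longrightarrow> \<bar>g' z\<bar> \<le> B"
    and y: "y \<in> {0..b}"
  shows "\<bar>F y - F 0 - g 0 * y\<bar> \<le> B * y^2"
proof -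
  have g_lipschitz: "\<bar>g z - g 0\<bar> \<le> B * z" if z: "z \<in> {0..y}" for z
  proof -
    have "norm (g z - g 0) \<le> B * norm (z - 0)"
    proof (rule field_differentiable_bound[of "{0..z}"])
      fix w assume "w \<in> {0..z}"
      then have w: "w \<in> {0..b}"
        using z y by auto
      show "(g has_field_derivative g' w) (at w within {0..z})"
        using dg[OF w] by (rule has_field_derivative_at_within)
      show "norm (g' w) \<le> B"
        using g'_le[OF w] by simp
    qed (use z in auto)
    then show ?thesis
      using z by simp
  qed
  have "norm ((F y - g 0 * y) - (F 0 - g 0 * 0)) \<le> B * y * norm (y - 0)"
  proof (rule field_differentiable_bound[of "{0..y}"])
    fix z assume z: "z \<in> {0..y}"
    have "z \<in> {0..b}"
      using z y by auto
    then show "((\<lambda>s. F s - g 0 * s) has_field_derivative g z - g 0) (at z within {0..y})"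
      by (auto intro!: derivative_eq_intros has_field_derivative_at_within[OF dF])
    have "\<bar>g z - g 0\<bar> \<le> B * z"
      using z by (rule g_lipschitz)
    also have "\<dots> \<le> B * y"
      using z y g'_le[of 0] by (intro mult_left_mono) auto
    finally show "norm (g z - g 0) \<le> B * y"
      by simp
  qed (use y in auto)
  then show ?thesis
    using y by (simp add: power2_eq_square mult.assoc)
qed

lemma abs_integral_le_of_abs_le_inverse_square:
  fixes r :: "real \<Rightarrow> real"
  assumes ab: "0 < a" "a \<le> b" and r: "r integrable_on {a..b}"
    and bound: "\<And>y. y \<in> {a..b} \<Longrightarrow> \<bar>r y\<bar> \<le> c / y^2"
  shows "\<bar>integral {a..b} r\<bar> \<le> c / a - c / b"
proof -
  have "((\<lambda>y. c / y^2) has_integral (- c / b) - (- c / a)) {a..b}"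
  proof (rule fundamental_theorem_of_calculus[OF ab(2)])
    fix y assume "y \<in> {a..b}"
    then have "((\<lambda>y. - c / y) has_real_derivative c / y^2) (at y)"
      using ab by (auto intro!: derivative_eq_intros simp: power2_eq_square)
    then show "((\<lambda>y. - c / y) has_vector_derivative c / y^2) (at y within {a..b})"
      by (simp add: has_real_derivative_iff_has_vector_derivative has_vector_derivative_at_within)
  qed
  then have "norm (integral {a..b} r) \<le> integral {a..b} (\<lambda>y. c / y^2)"
    using integral_norm_bound_integral[OF r has_integral_integrable] bound by auto
  with \<open>((\<lambda>y. c / y^2) has_integral _) _\<close> show ?thesis
    by (simp add: integral_unique)
qed

lemma has_real_derivative_neg_cos_div:
  fixes F g g' :: "real \<Rightarrow> real"
  assumes dF: "(F has_real_derivative g y) (at y)" and dg: "(g has_real_derivative g' y) (at y)"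
    and "y \<noteq> 0" "g y \<noteq> 0"
  shows "((\<lambda>y. - cos (F y) / (y * g y)) has_real_derivative
           sin (F y) / y + cos (F y) * (g y + y * g' y) / (y * g y)^2) (at y)"
proof -
  have "((\<lambda>y. - cos (F y)) has_real_derivative sin (F y) * g y) (at y)"
    by (auto intro!: derivative_eq_intros dF)
  moreover have "((\<lambda>y. y * g y) has_real_derivative g y + y * g' y) (at y)"
    by (auto intro!: derivative_eq_intros dg)
  ultimately have "((\<lambda>y. - cos (F y) / (y * g y)) has_real_derivative
      (sin (F y) * g y * (y * g y) - - cos (F y) * (g y + y * g' y)) / ((y * g y) * (y * g y))) (at y)"
    using assms by (intro DERIV_divide) auto
  moreover have "(sin (F y) * g y * (y * g y) - - cos (F y) * (g y + y * g' y)) / ((y * g y) * (y * g y))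
      = sin (F y) / y + cos (F y) * (g y + y * g' y) / (y * g y)^2"
  proof -
    have "sin (F y) * g y * (y * g y) / ((y * g y) * (y * g y)) = sin (F y) / y"
      using assms by (simp add: field_simps)
    then show ?thesis
      by (simp add: add_divide_distrib power2_eq_square)
  qed
  ultimately show ?thesis
    by simp
qed

lemma abs_cos_mult_div_square_le:
  fixes y G G' K m b w :: real
  assumes y: "0 < y" "y \<le> b" and m: "0 < m" "m \<le> G" and K: "K \<ge> 0" and G': "\<bar>G'\<bar> \<le> K * G"
  shows "\<bar>cos w * (G + y * G') / (y * G)^2\<bar> \<le> (1 + K * b) / m / y^2"
proof -
  have G: "G > 0"
    using m by linarith
  have "\<bar>G + y * G'\<bar> \<le> G + y * \<bar>G'\<bar>"
    using y G abs_triangle_ineq[of G "y * G'"] by (simp add: abs_mult)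
  also have "\<dots> \<le> G + y * (K * G)"
    using y G' by simp
  also have "\<dots> \<le> (1 + K * b) * G"
    using y G K by (simp add: algebra_simps mult_left_mono mult_right_mono)
  finally have num: "\<bar>G + y * G'\<bar> \<le> (1 + K * b) * G" .
  have "\<bar>cos w * (G + y * G') / (y * G)^2\<bar> = \<bar>cos w\<bar> * \<bar>G + y * G'\<bar> / (y * G)^2"
    by (simp add: abs_mult)
  also have "\<dots> \<le> 1 * ((1 + K * b) * G) / (y * G)^2"
    using num by (intro divide_right_mono mult_mono) auto
  also have "\<dots> = (1 + K * b) / (G * y^2)"
    using y G by (simp add: power2_eq_square field_simps)
  also have "\<dots> \<le> (1 + K * b) / (m * y^2)"
    using y m K by (intro divide_left_mono mult_right_mono) auto
  finally show ?thesis
    by simp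
qed

text \<open>Integration by parts against \<open>\<Phi> y = - cos (F y) / (y * g y)\<close>, whose derivative is
  \<open>sin (F y) / y\<close> up to an \<open>O(1 / y^2)\<close> remainder.\<close>
lemma abs_integral_sin_div_le_tail:
  fixes F g g' :: "real \<Rightarrow> real"
  assumes ab: "0 < a" "a \<le> b" and m: "m > 0" and K: "K \<ge> 0"
    and dF: "\<And>y. y \<in> {a..b} \<Longrightarrow> (F has_real_derivative g y) (at y)"
    and dg: "\<And>y. y \<in> {a..b} \<Longrightarrow> (g has_real_derivative g' y) (at y)"
    and g_ge: "\<And>y. y \<in> {a..b} \<Longrightarrow> m \<le> g y"
    and g'_le: "\<And>y. y \<in> {a..b} \<Longrightarrow> \<bar>g' y\<bar> \<le> K * g y"
  shows "\<bar>integral {a..b} (\<lambda>y. sin (F y) / y)\<bar> \<le> (3 + K * b) / (m * a)"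
proof -
  define h where "h y = sin (F y) / y" for y
  define \<Phi> where "\<Phi> y = - cos (F y) / (y * g y)" for y
  define r where "r y = cos (F y) * (g y + y * g' y) / (y * g y)^2" for y
  have pos: "y > 0" "g y > 0" if "y \<in> {a..b}" for y
    using that ab m g_ge[OF that] by auto
  have "(\<Phi> has_vector_derivative h y + r y) (at y within {a..b})" if y: "y \<in> {a..b}" for y
    using has_real_derivative_neg_cos_div[where F = F and g = g and g' = g', OF dF[OF y] dg[OF y]] pos[OF y]
    unfolding \<Phi>_def h_def r_def
    by (simp add: has_real_derivative_iff_has_vector_derivative has_vector_derivative_at_within)
  then have hr: "((\<lambda>y. h y + r y) has_integral \<Phi> b - \<Phi> a) {a..b}"
    by (rule fundamental_theorem_of_calculus[OF ab(2)])
  have "continuous_on {a..b} F"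
    using dF by (meson DERIV_isCont continuous_at_imp_continuous_on)
  then have int_h: "h integrable_on {a..b}"
    unfolding h_def using ab by (intro integrable_continuous_interval continuous_intros) auto
  then have int_r: "r integrable_on {a..b}"
    using integrable_diff[OF has_integral_integrable[OF hr] int_h] by simp
  have h_eq: "integral {a..b} h = \<Phi> b - \<Phi> a - integral {a..b} r"
    using integral_unique[OF hr] integral_add[OF int_h int_r] by simp
  have "\<bar>r y\<bar> \<le> (1 + K * b) / m / y^2" if y: "y \<in> {a..b}" for y
    unfolding r_def using y pos[OF y] g_ge[OF y] g'_le[OF y] m K
    by (intro abs_cos_mult_div_square_le) auto
  then have "\<bar>integral {a..b} r\<bar> \<le> (1 + K * b) / m / a - (1 + K * b) / m / b"
    by (rule abs_integral_le_of_abs_le_inverse_square[OF ab int_r])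
  also have "\<dots> \<le> (1 + K * b) / (m * a)"
    using ab m K by simp
  finally have "\<bar>integral {a..b} r\<bar> \<le> (1 + K * b) / (m * a)" .
  moreover have "\<bar>\<Phi> y\<bar> \<le> 1 / (m * a)" if "y \<in> {a..b}" for y
  proof -
    have "\<bar>\<Phi> y\<bar> \<le> 1 / (g y * y)"
      using pos[OF that] abs_cos_le_one[of "F y"]
      by (simp add: \<Phi>_def abs_mult divide_right_mono mult.commute)
    also have "\<dots> \<le> 1 / (m * a)"
      using pos[OF that] that g_ge[OF that] m ab
      by (intro divide_left_mono mult_mono) auto
    finally show ?thesis .
  qed
  ultimately have "\<bar>integral {a..b} h\<bar> \<le> 1 / (m * a) + 1 / (m * a) + (1 + K * b) / (m * a)"
    using ab h_eq by (smt (verit) atLeastAtMost_iff)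
  then show ?thesis
    by (simp add: h_def[abs_def] add_divide_distrib[symmetric])
qed

lemma filterlim_root3_at_top: "filterlim (root 3) at_top at_top"
  unfolding filterlim_at_top eventually_at_top_linorder
proof (intro allI exI[of _ "_ ^ 3"] allI impI)
  fix Z x :: real assume "Z ^ 3 \<le> x"
  then show "Z \<le> root 3 x"
    by (metis odd_real_root_power_cancel real_root_le_iff odd_numeral zero_less_numeral)
qed

lemma integral_sin_div_approx_Si:
  fixes F g g' :: "real \<Rightarrow> real"
  assumes b: "0 < b" "b \<le> \<delta>" and K: "K \<ge> 0" and g0: "g 0 > 0" and F0: "F 0 = 0"
    and dF: "\<And>y. (F has_real_derivative g y) (at y)"
    and dg: "\<And>y. y \<in> {0..\<delta>} \<Longrightarrow> (g has_real_derivative g' y) (at y)"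
    and g'_le: "\<And>y. y \<in> {0..\<delta>} \<Longrightarrow> \<bar>g' y\<bar> \<le> K * g y"
    and g_le: "\<And>y. y \<in> {0..\<delta>} \<Longrightarrow> g y \<le> R * g 0"
    and g_ge: "\<And>y. y \<in> {0..\<delta>} \<Longrightarrow> g 0 \<le> R * g y"
  shows "\<bar>integral {0..\<delta>} (\<lambda>y. sin (F y) / y) - Si (g 0 * b)\<bar>
           \<le> K * R * (g 0 * b^2) + R * (3 + K * \<delta>) / (g 0 * b)"
proof -
  have "g 0 \<le> R * g 0"
    using g_ge[of 0] b by simp
  then have R: "R \<ge> 1"
    using g0 by simp
  have int: "(\<lambda>y. sin (F y) / y) integrable_on {u..v}" for u v
    using F0 DERIV_isCont[OF dF] dF by (rule integrable_on_sin_comp_div)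
  have "\<bar>g' y\<bar> \<le> K * R * g 0" if "y \<in> {0..b}" for y
    using that b g'_le[of y] mult_left_mono[OF g_le[of y] K] by auto
  then have "\<bar>F y - g 0 * y\<bar> \<le> K * R * g 0 * y^2" if "y \<in> {0..b}" for y
    using abs_sub_tangent_at_0_le[of b F g g' "K * R * g 0" y] that b dF dg F0 by auto
  from integral_sin_div_approx_Si_near_0[OF b(1) int this]
  have near: "\<bar>integral {0..b} (\<lambda>y. sin (F y) / y) - Si (g 0 * b)\<bar> \<le> K * R * (g 0 * b^2)"
    by (simp add: mult.assoc)
  have m: "g 0 / R \<le> g y" if "y \<in> {b..\<delta>}" for y
    using g_ge[of y] that b R by (simp add: divide_le_eq mult.commute)
  have tail: "\<bar>integral {b..\<delta>} (\<lambda>y. sin (F y) / y)\<bar> \<le> (3 + K * \<delta>) / (g 0 / R * b)"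
    using g0 R b by (intro abs_integral_sin_div_le_tail[OF b _ K dF dg m g'_le]) auto
  have "integral {0..b} (\<lambda>y. sin (F y) / y) + integral {b..\<delta>} (\<lambda>y. sin (F y) / y)
          = integral {0..\<delta>} (\<lambda>y. sin (F y) / y)"
    using b by (intro Henstock_Kurzweil_Integration.integral_combine int) auto
  moreover have "(3 + K * \<delta>) / (g 0 / R * b) = R * (3 + K * \<delta>) / (g 0 * b)"
    using R by (simp add: field_simps)
  ultimately show ?thesis
    using near tail by linarith
qed

text \<open>Cutting at \<open>b = 1 / t^2\<close> with \<open>t = root 3 (g 0)\<close> balances the two error terms:
  both become \<open>O(1 / t)\<close>, while \<open>g 0 * b = t\<close>.\<close>
lemma integral_sin_div_tendsto_pi_half:
  fixes F g g' :: "nat \<Rightarrow> real \<Rightarrow> real"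
  assumes \<delta>: "\<delta> > 0" and K: "K \<ge> 0" and F0: "\<And>n. F n 0 = 0"
    and dF: "\<And>n y. (F n has_real_derivative g n y) (at y)"
    and dg: "\<And>n y. y \<in> {0..\<delta>} \<Longrightarrow> (g n has_real_derivative g' n y) (at y)"
    and g'_le: "\<And>n y. y \<in> {0..\<delta>} \<Longrightarrow> \<bar>g' n y\<bar> \<le> K * g n y"
    and g_le: "\<And>n y. y \<in> {0..\<delta>} \<Longrightarrow> g n y \<le> R * g n 0"
    and g_ge: "\<And>n y. y \<in> {0..\<delta>} \<Longrightarrow> g n 0 \<le> R * g n y"
    and g0_lim: "filterlim (\<lambda>n. g n 0) at_top sequentially"
  shows "(\<lambda>n. integral {0..\<delta>} (\<lambda>y. sin (F n y) / y)) \<longlonglongrightarrow> pi / 2"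
proof -
  define t where "t n = root 3 (g n 0)" for n
  define M where "M = K * R + R * (3 + K * \<delta>)"
  define I where "I n = integral {0..\<delta>} (\<lambda>y. sin (F n y) / y)" for n
  have t_lim: "filterlim t at_top sequentially"
    unfolding t_def by (rule filterlim_compose[OF filterlim_root3_at_top g0_lim])
  have "eventually (\<lambda>n. t n \<ge> max 1 (1 / \<delta>)) sequentially"
    using t_lim unfolding filterlim_at_top by blast
  then have "eventually (\<lambda>n. norm (I n - Si (t n)) \<le> M / t n) sequentially"
  proof eventually_elim
    case (elim n)
    then have t: "t n \<ge> 1" "t n \<ge> 1 / \<delta>"
      by auto
    have g0: "g n 0 = t n ^ 3"
      by (simp add: t_def odd_real_root_pow)
    have "1 / \<delta> \<le> t n ^ 2"
      using t mult_left_mono[of 1 "t n" "t n"] unfolding power2_eq_square by linarith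
    then have "1 / t n ^ 2 \<le> 1 / (1 / \<delta>)"
      using \<delta> t by (intro divide_left_mono) auto
    then have b: "0 < 1 / t n ^ 2" "1 / t n ^ 2 \<le> \<delta>"
      using t by auto
    have g0_pos: "g n 0 > 0"
      using t by (simp add: g0)
    have "g n 0 * (1 / t n ^ 2) = t n" "g n 0 * (1 / t n ^ 2)^2 = 1 / t n"
      using t by (simp_all add: g0 power2_eq_square power3_eq_cube)
    then have "\<bar>I n - Si (t n)\<bar> \<le> K * R * (1 / t n) + R * (3 + K * \<delta>) / t n"
      using integral_sin_div_approx_Si[OF b K g0_pos F0 dF dg g'_le g_le g_ge] by (simp add: I_def)
    then show ?case
      unfolding M_def add_divide_distrib by simp
  qed
  moreover have "(\<lambda>n. M / t n) \<longlonglongrightarrow> 0"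
    by (rule tendsto_divide_0[OF tendsto_const filterlim_at_top_imp_at_infinity[OF t_lim]])
  ultimately have "(\<lambda>n. I n - Si (t n)) \<longlonglongrightarrow> 0"
    by (rule Lim_null_comparison)
  moreover have "(\<lambda>n. Si (t n)) \<longlonglongrightarrow> pi / 2"
    by (rule filterlim_compose[OF Si_at_top t_lim])
  ultimately have "(\<lambda>n. (I n - Si (t n)) + Si (t n)) \<longlonglongrightarrow> 0 + pi / 2"
    by (rule tendsto_add)
  then show ?thesis
    by (simp add: I_def)
qed

definition poisson_kernel :: "real \<Rightarrow> real \<Rightarrow> real \<Rightarrow> real" where
  "poisson_kernel s c u = 2 * s / ((u - c)^2 + s^2)"

lemma poisson_kernel_denom_pos:
  fixes s c u :: real
  assumes "s \<noteq> 0"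
  shows "(u - c)^2 + s^2 > 0"
  using assms by (auto intro!: add_nonneg_pos)

lemma has_real_derivative_arctan_poisson_kernel:
  fixes s c u :: real
  assumes "s \<noteq> 0"
  shows "((\<lambda>u. 2 * arctan ((u - c) / s)) has_real_derivative poisson_kernel s c u) (at u)"
proof -
  have "((\<lambda>u. 2 * arctan ((u - c) / s)) has_real_derivative 2 * (inverse (1 + ((u - c) / s)^2) * (1 / s))) (at u)"
    using assms by (auto intro!: derivative_eq_intros)
  moreover have "2 * (inverse (1 + ((u - c) / s)^2) * (1 / s)) = poisson_kernel s c u"
    using assms poisson_kernel_denom_pos[OF assms, of u c]
    by (simp add: poisson_kernel_def field_simps power2_eq_square)
  ultimately show ?thesis
    by simp
qed

lemma has_real_derivative_poisson_kernel:
  fixes s c u :: real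
  assumes "s \<noteq> 0"
  shows "(poisson_kernel s c has_real_derivative - 4 * s * (u - c) / ((u - c)^2 + s^2)^2) (at u)"
  unfolding poisson_kernel_def
  using poisson_kernel_denom_pos[OF assms, of u c]
  by (auto intro!: derivative_eq_intros simp: power2_eq_square field_simps)

lemma abs_deriv_poisson_kernel_le:
  fixes s c u \<eta> :: real
  assumes s: "s > 0" and \<eta>: "\<eta> > 0" and dist: "\<eta>^2 \<le> (u - c)^2 + s^2"
  shows "\<bar>- 4 * s * (u - c) / ((u - c)^2 + s^2)^2\<bar> \<le> 2 / \<eta> * poisson_kernel s c u"
proof -
  define D where "D = (u - c)^2 + s^2"
  have D: "D > 0"
    unfolding D_def using s by (simp add: add_nonneg_pos)
  have "\<bar>u - c\<bar> * \<eta> \<le> D"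
  proof (cases "\<bar>u - c\<bar> \<le> \<eta>")
    case True
    then have "\<bar>u - c\<bar> * \<eta> \<le> \<eta>^2"
      using \<eta> by (simp add: power2_eq_square mult_right_mono)
    then show ?thesis
      using dist D_def by linarith
  next
    case False
    then have "\<bar>u - c\<bar> * \<eta> \<le> \<bar>u - c\<bar> * \<bar>u - c\<bar>"
      using \<eta> by (intro mult_left_mono) auto
    then have "\<bar>u - c\<bar> * \<eta> \<le> (u - c)^2"
      by (simp add: power2_eq_square)
    then show ?thesis
      unfolding D_def by (smt (verit) zero_le_power2)
  qed
  then have "\<bar>u - c\<bar> / D \<le> 1 / \<eta>"
    using D \<eta> by (simp add: divide_simps)
  then have "2 * s / D * (2 * \<bar>u - c\<bar> / D) \<le> 2 * s / D * (2 / \<eta>)"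
    using s D by (intro mult_left_mono) auto
  moreover have "\<bar>u * 4 - c * 4\<bar> = \<bar>u - c\<bar> * 4"
    by (cases "u \<ge> c") auto
  ultimately show ?thesis
    using s D unfolding poisson_kernel_def D_def[symmetric]
    by (simp add: abs_mult power2_eq_square mult_ac)
qed

text \<open>Compare the denominators: \<open>(u - c)^2 \<le> 2 (v - c)^2 + 2 (u - v)^2\<close> and
  \<open>(u - v)^2 \<le> \<delta>^2 \<le> (\<delta> / \<eta>)^2 ((v - c)^2 + s^2)\<close>.\<close>
lemma poisson_kernel_le_mult:
  fixes s c u v \<eta> \<delta> :: real
  assumes s: "s > 0" and \<eta>: "\<eta> > 0" and uv: "\<bar>u - v\<bar> \<le> \<delta>" and dist: "\<eta>^2 \<le> (v - c)^2 + s^2"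
  shows "poisson_kernel s c v \<le> (2 + 2 * \<delta>^2 / \<eta>^2) * poisson_kernel s c u"
proof -
  define Du Dv q where "Du = (u - c)^2 + s^2" and "Dv = (v - c)^2 + s^2" and "q = \<delta>^2 / \<eta>^2"
  have pos: "Du > 0" "Dv > 0" "2 + 2 * q > 0"
    unfolding Du_def Dv_def q_def using s by (simp_all add: add_nonneg_pos add_pos_nonneg)
  have "(u - c)^2 \<le> 2 * (v - c)^2 + 2 * (u - v)^2"
    using zero_le_power2[of "(v - c) - (u - v)"] by (simp add: power2_eq_square algebra_simps)
  moreover have "(u - v)^2 \<le> \<delta>^2"
    using power_mono[OF uv, of 2] by simp
  moreover have "q * \<eta>^2 \<le> q * Dv"
    using dist by (intro mult_left_mono) (auto simp: Dv_def q_def)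
  moreover have "q * \<eta>^2 = \<delta>^2"
    using \<eta> by (simp add: q_def)
  ultimately have "Du \<le> 2 * Dv + 2 * (q * Dv)"
    using zero_le_power2[of s] Du_def Dv_def by linarith
  then have "Du \<le> (2 + 2 * q) * Dv"
    by (simp add: algebra_simps)
  then have "2 * s * (2 + 2 * q) / ((2 + 2 * q) * Dv) \<le> 2 * s * (2 + 2 * q) / Du"
    using pos s by (intro divide_left_mono mult_nonneg_nonneg mult_pos_pos) auto
  then show ?thesis
    unfolding poisson_kernel_def Du_def[symmetric] Dv_def[symmetric] q_def[symmetric]
    using pos by (simp add: q_def mult.commute)
qed

lemma poisson_kernel_ge:
  fixes s c x :: real
  assumes "s > 0"
  shows "2 * s / ((1 + x^2) * (1 + c^2 + s^2)) \<le> poisson_kernel s c x"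
proof -
  have "(x - c)^2 + s^2 \<le> (1 + x^2) * (1 + c^2 + s^2)"
    using zero_le_power2[of "1 + x * c"] zero_le_power2[of "x * s"]
    by (simp add: algebra_simps power2_eq_square)
  then show ?thesis
    unfolding poisson_kernel_def using assms poisson_kernel_denom_pos[of s x c]
    by (intro divide_left_mono) (auto intro!: mult_pos_pos add_pos_nonneg)
qed

definition poisson_sum_deriv :: "(nat \<Rightarrow> complex) \<Rightarrow> nat \<Rightarrow> real \<Rightarrow> real" where
  "poisson_sum_deriv a n u =
     (\<Sum>k<n. - 4 * Im (a k) * (u - Re (a k)) / ((u - Re (a k))^2 + (Im (a k))^2)^2)"

definition arctan_sum :: "(nat \<Rightarrow> complex) \<Rightarrow> nat \<Rightarrow> real \<Rightarrow> real" where
  "arctan_sum a n u = (\<Sum>k<n. 2 * arctan ((u - Re (a k)) / Im (a k)))"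

lemma poisson_sum_eq_sum_poisson_kernel:
  "poisson_sum a n u = (\<Sum>k<n. poisson_kernel (Im (a k)) (Re (a k)) u)"
  by (simp add: poisson_sum_def poisson_kernel_def)

lemma has_real_derivative_arctan_sum:
  assumes "\<And>k. Im (a k) \<noteq> 0"
  shows "(arctan_sum a n has_real_derivative poisson_sum a n u) (at u)"
  unfolding arctan_sum_def [abs_def] poisson_sum_eq_sum_poisson_kernel
  by (intro DERIV_sum has_real_derivative_arctan_poisson_kernel assms)

lemma has_real_derivative_poisson_sum:
  assumes "\<And>k. Im (a k) \<noteq> 0"
  shows "(poisson_sum a n has_real_derivative poisson_sum_deriv a n u) (at u)"
proof -
  have "((\<lambda>u. \<Sum>k<n. poisson_kernel (Im (a k)) (Re (a k)) u) has_real_derivative poisson_sum_deriv a n u) (at u)"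
    unfolding poisson_sum_deriv_def by (intro DERIV_sum has_real_derivative_poisson_kernel assms)
  then show ?thesis
    by (simp add: poisson_sum_eq_sum_poisson_kernel [abs_def])
qed

lemma power2_le_of_le_cmod_of_real_diff:
  assumes "0 \<le> \<eta>" "\<eta> \<le> cmod (complex_of_real u - z)"
  shows "\<eta>^2 \<le> (u - Re z)^2 + (Im z)^2"
  using power_mono[OF assms(2,1), of 2] by (simp add: cmod_power2)

lemma abs_poisson_sum_deriv_le:
  assumes Im: "\<And>k. Im (a k) > 0" and \<eta>: "\<eta> > 0"
    and dist: "\<And>k. \<eta> \<le> cmod (complex_of_real u - a k)"
  shows "\<bar>poisson_sum_deriv a n u\<bar> \<le> 2 / \<eta> * poisson_sum a n u"
proof -
  have "\<bar>poisson_sum_deriv a n u\<bar>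
          \<le> (\<Sum>k<n. \<bar>- 4 * Im (a k) * (u - Re (a k)) / ((u - Re (a k))^2 + (Im (a k))^2)^2\<bar>)"
    unfolding poisson_sum_deriv_def by (rule sum_abs)
  also have "\<dots> \<le> (\<Sum>k<n. 2 / \<eta> * poisson_kernel (Im (a k)) (Re (a k)) u)"
    using \<eta> dist by (intro sum_mono abs_deriv_poisson_kernel_le Im power2_le_of_le_cmod_of_real_diff) auto
  finally show ?thesis
    by (simp add: poisson_sum_eq_sum_poisson_kernel sum_distrib_left)
qed

lemma poisson_sum_le_mult:
  assumes Im: "\<And>k. Im (a k) > 0" and \<eta>: "\<eta> > 0" and uv: "\<bar>u - v\<bar> \<le> \<delta>"
    and dist: "\<And>k. \<eta> \<le> cmod (complex_of_real v - a k)"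
  shows "poisson_sum a n v \<le> (2 + 2 * \<delta>^2 / \<eta>^2) * poisson_sum a n u"
proof -
  have "poisson_sum a n v \<le> (\<Sum>k<n. (2 + 2 * \<delta>^2 / \<eta>^2) * poisson_kernel (Im (a k)) (Re (a k)) u)"
    unfolding poisson_sum_eq_sum_poisson_kernel using \<eta> dist
    by (intro sum_mono poisson_kernel_le_mult Im uv power2_le_of_le_cmod_of_real_diff) auto
  then show ?thesis
    by (simp add: poisson_sum_eq_sum_poisson_kernel sum_distrib_left)
qed

lemma poisson_sum_tendsto_at_top:
  assumes Im: "\<And>k. Im (a k) > 0" and sigma: "filterlim (sigma a) at_top sequentially"
  shows "filterlim (\<lambda>n. poisson_sum a n x) at_top sequentially"
proof (rule filterlim_at_top_mono[OF _ always_eventually])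
  show "filterlim (\<lambda>n. 2 / (1 + x^2) * sigma a n) at_top sequentially"
    by (rule filterlim_tendsto_pos_mult_at_top[OF tendsto_const _ sigma]) (simp add: add_pos_nonneg)
  show "\<forall>n. 2 / (1 + x^2) * sigma a n \<le> poisson_sum a n x"
  proof
    fix n
    have "2 / (1 + x^2) * sigma a n
            = (\<Sum>k<n. 2 * Im (a k) / ((1 + x^2) * (1 + (Re (a k))^2 + (Im (a k))^2)))"
      unfolding sigma_def sum_distrib_left using Im
      by (intro sum.cong) (auto simp: cmod_power2 less_imp_le add.assoc)
    also have "\<dots> \<le> poisson_sum a n x"
      unfolding poisson_sum_eq_sum_poisson_kernel by (intro sum_mono poisson_kernel_ge Im)
    finally show "2 / (1 + x^2) * sigma a n \<le> poisson_sum a n x" .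
  qed
qed

lemma integral_poisson_sum:
  assumes "\<And>k. Im (a k) \<noteq> 0" and "u \<le> v"
  shows "integral {u..v} (poisson_sum a n) = arctan_sum a n v - arctan_sum a n u"
  using assms
  by (intro integral_unique fundamental_theorem_of_calculus)
     (auto simp: has_real_derivative_iff_has_vector_derivative [symmetric]
       intro: has_field_derivative_at_within has_real_derivative_arctan_sum)

lemma mult_mu_eq_arctan_sum_diff:
  assumes "\<And>k. Im (a k) \<noteq> 0" and "y \<noteq> 0"
  shows "y * mu a n y x = arctan_sum a n (x + y) - arctan_sum a n x"
  using assms integral_poisson_sum[OF assms(1), where u = x and v = "x + y"]
    integral_poisson_sum[OF assms(1), where u = "x + y" and v = x]
  by (auto simp: mu_def)

text \<open>A point of \<open>\<real>\<close> in the closure of the range of \<open>a\<close> is not a value of \<open>a\<close>, hence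
  a limit point of the range and thus the limit of a subsequence.\<close>
lemma no_real_limit_points_imp_dist_ge:
  assumes Im: "\<And>k. Im (a k) \<noteq> 0" and nlp: "no_real_limit_points a" and S: "compact S"
  shows "\<exists>\<eta>>0. \<forall>k. \<forall>u\<in>S. \<eta> \<le> cmod (complex_of_real u - a k)"
proof (cases "S = {}")
  case True
  then show ?thesis
    using zero_less_one by blast
next
  case False
  define S' where "S' = complex_of_real ` S"
  have "S' \<inter> closure (range a) = {}"
  proof (rule ccontr)
    assume "S' \<inter> closure (range a) \<noteq> {}"
    then obtain r where r: "complex_of_real r \<in> closure (range a)"
      unfolding S'_def by auto
    moreover have "complex_of_real r \<notin> range a"
      using Im by (metis image_iff complex_is_Real_iff Reals_of_real)
    ultimately have "complex_of_real r islimpt range a"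
      by (simp add: closure_def)
    then show False
      using nlp islimpt_range_imp_convergent_subsequence unfolding no_real_limit_points_def by blast
  qed
  moreover have "compact S'"
    unfolding S'_def by (intro compact_continuous_image S continuous_intros)
  ultimately have "setdist S' (closure (range a)) \<noteq> 0"
    using False setdist_eq_0_compact_closed[of S' "closure (range a)"] by (simp add: S'_def)
  then have \<eta>: "setdist S' (closure (range a)) > 0"
    using setdist_pos_le[of S' "closure (range a)"] by linarith
  have "setdist S' (closure (range a)) \<le> cmod (complex_of_real u - a k)" if "u \<in> S" for u k
    using setdist_le_dist[of "complex_of_real u" S' "a k" "closure (range a)"] that
      closure_subset[of "range a"]
    by (auto simp: S'_def dist_norm)
  then show ?thesis
    using \<eta> by blast
qed

lemma integral_sin_mult_mu_tendsto_pi_half: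
  assumes Im: "\<And>k. Im (a k) > 0" and nlp: "no_real_limit_points a"
    and sigma: "filterlim (sigma a) at_top sequentially"
    and \<delta>: "\<delta> > 0" and e: "e \<in> {1, -1}"
  shows "(\<lambda>n. integral {0..\<delta>} (\<lambda>y. sin (y * mu a n (e * y) x) / y)) \<longlonglongrightarrow> pi / 2"
proof -
  have Im': "\<And>k. Im (a k) \<noteq> 0"
    using Im by (metis less_irrefl)
  obtain \<eta> where \<eta>: "\<eta> > 0" and dist: "\<And>k u. u \<in> {x - \<delta>..x + \<delta>} \<Longrightarrow> \<eta> \<le> cmod (complex_of_real u - a k)"
    using no_real_limit_points_imp_dist_ge[OF Im' nlp compact_Icc] by blast
  have ee: "e * (e * z) = z" for z
    using e by auto
  have abs_e: "\<bar>e\<bar> = 1"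
    using e by auto
  have in_nbhd: "x + e * y \<in> {x - \<delta>..x + \<delta>}" if "y \<in> {0..\<delta>}" for y
    using that e by auto
  have lim: "(\<lambda>n. integral {0..\<delta>} (\<lambda>y. sin (e * (arctan_sum a n (x + e * y) - arctan_sum a n x)) / y))
          \<longlonglongrightarrow> pi / 2"
  proof (rule integral_sin_div_tendsto_pi_half[OF \<delta>, where K = "2 / \<eta>" and R = "2 + 2 * \<delta>^2 / \<eta>^2"
      and g = "\<lambda>n y. poisson_sum a n (x + e * y)" and g' = "\<lambda>n y. e * poisson_sum_deriv a n (x + e * y)"])
    fix n y
    have inner: "((\<lambda>y. x + e * y) has_real_derivative e) (at y)"
      by (auto intro!: derivative_eq_intros)
    show "((\<lambda>y. e * (arctan_sum a n (x + e * y) - arctan_sum a n x))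
            has_real_derivative poisson_sum a n (x + e * y)) (at y)"
      using DERIV_chain2[OF has_real_derivative_arctan_sum[of a, OF Im'] inner]
      by (auto intro!: derivative_eq_intros simp: mult.commute ee)
    show "((\<lambda>y. poisson_sum a n (x + e * y)) has_real_derivative e * poisson_sum_deriv a n (x + e * y)) (at y)"
      using DERIV_chain2[OF has_real_derivative_poisson_sum[of a, OF Im'] inner]
      by (simp add: mult.commute)
    assume y: "y \<in> {0..\<delta>}"
    show "\<bar>e * poisson_sum_deriv a n (x + e * y)\<bar> \<le> 2 / \<eta> * poisson_sum a n (x + e * y)"
      using abs_poisson_sum_deriv_le[of a, OF Im \<eta> dist[OF in_nbhd[OF y]]] abs_e by (simp add: abs_mult)
    show "poisson_sum a n (x + e * y) \<le> (2 + 2 * \<delta>^2 / \<eta>^2) * poisson_sum a n (x + e * 0)"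
      using poisson_sum_le_mult[where a = a and u = x and v = "x + e * y", OF Im \<eta> _ dist[OF in_nbhd[OF y]]]
        y abs_e by (simp add: abs_mult)
    show "poisson_sum a n (x + e * 0) \<le> (2 + 2 * \<delta>^2 / \<eta>^2) * poisson_sum a n (x + e * y)"
      using poisson_sum_le_mult[where a = a and u = "x + e * y" and v = x, OF Im \<eta> _ dist] y abs_e \<delta>
      by (simp add: abs_mult)
  qed (use \<eta> poisson_sum_tendsto_at_top[OF Im sigma] in auto)
  have integrand: "sin (y * mu a n (e * y) x) / y
                   = sin (e * (arctan_sum a n (x + e * y) - arctan_sum a n x)) / y" for n y
  proof (cases "y = 0")
    case False
    then show ?thesis
      using mult_mu_eq_arctan_sum_diff[where a = a and y = "e * y", OF Im'] e
      by (metis ee mult.assoc mult_eq_0_iff)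
  qed simp
  show ?thesis
    unfolding integrand by (rule lim)
qed

theorem lemma7:
  fixes a :: "nat \<Rightarrow> complex" and C :: real
  assumes "\<And>k. Im (a k) > 0"
    and "no_real_limit_points a"
    and "filterlim (sigma a) at_top sequentially"
    and "\<And>n. n \<ge> 1 \<Longrightarrow> varsigma a n / sigma a n \<le> C"
  shows "\<forall>\<delta>>0. \<forall>x::real.
    (\<lambda>n. integral {0..\<delta>} (\<lambda>y. sin (y * mu a n y x) / y)) \<longlonglongrightarrow> pi / 2 \<and>
    (\<lambda>n. integral {0..\<delta>} (\<lambda>y. sin (y * mu a n (- y) x) / y)) \<longlonglongrightarrow> pi / 2"
  using integral_sin_mult_mu_tendsto_pi_half[OF assms(1-3), of _ 1]
    integral_sin_mult_mu_tendsto_pi_half[OF assms(1-3), of _ "-1"]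
  by simp

end
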